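(* Let $G$ be a connected $(2K_2, K_5-e)$-free graph. Then either $G$ is $(2K_2,\text{diamond})$-free, or there exists a partition $(V_1,\dots,V_5)$ of $V(G)$ (parts possibly empty) such that (i) $G[V_1]$ is a $(2K_2,\text{diamond})$-free graph with $\omega(G[V_1])\le\omega(G)-1$, and (ii) $V_i$ is an independent set for each $i\in\{2,3,4,5\}$.
   Context: All graphs are finite, simple and undirected. $2K_2$ is the disjoint union of two edges. $K_5-e$ is the complete graph on 5 vertices minus one edge. A diamond is $K_4$ minus an edge. A graph is $\mathcal F$-free if it has no induced subgraph isomorphic to a member of $\mathcal F$. $G[S]$ is the subgraph induced by $S$; $\omega$ is the clique number. *)

theory Defs
  imports Main
begin

text \<open>A finite simple graph is a finite vertex set V with a symmetric,
  irreflexive adjacency relation E (only its restriction to V matters).\<close>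

definition simple_graph :: "'a set \<Rightarrow> ('a \<Rightarrow> 'a \<Rightarrow> bool) \<Rightarrow> bool" where
  "simple_graph V E \<longleftrightarrow> finite V \<and> (\<forall>x y. E x y \<longrightarrow> E y x) \<and> (\<forall>x. \<not> E x x)"

definition contains_induced ::
  "'b set \<Rightarrow> ('b \<Rightarrow> 'b \<Rightarrow> bool) \<Rightarrow> 'a set \<Rightarrow> ('a \<Rightarrow> 'a \<Rightarrow> bool) \<Rightarrow> bool" where
  "contains_induced VH EH V E \<longleftrightarrow>
     (\<exists>f. inj_on f VH \<and> f ` VH \<subseteq> V \<and>
          (\<forall>x\<in>VH. \<forall>y\<in>VH. E (f x) (f y) \<longleftrightarrow> EH x y))"

definition twoK2_E :: "nat \<Rightarrow> nat \<Rightarrow> bool" where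
  "twoK2_E x y \<longleftrightarrow> {x, y} = {0, 1} \<or> {x, y} = {2, 3}"

definition K5e_E :: "nat \<Rightarrow> nat \<Rightarrow> bool" where
  "K5e_E x y \<longleftrightarrow> x \<noteq> y \<and> {x, y} \<noteq> {0, 1}"

definition diamond_E :: "nat \<Rightarrow> nat \<Rightarrow> bool" where
  "diamond_E x y \<longleftrightarrow> x \<noteq> y \<and> {x, y} \<noteq> {0, 1}"

definition twoK2_free :: "'a set \<Rightarrow> ('a \<Rightarrow> 'a \<Rightarrow> bool) \<Rightarrow> bool" where
  "twoK2_free V E \<longleftrightarrow> \<not> contains_induced {0..<4} twoK2_E V E"

definition K5e_free :: "'a set \<Rightarrow> ('a \<Rightarrow> 'a \<Rightarrow> bool) \<Rightarrow> bool" where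
  "K5e_free V E \<longleftrightarrow> \<not> contains_induced {0..<5} K5e_E V E"

definition diamond_free :: "'a set \<Rightarrow> ('a \<Rightarrow> 'a \<Rightarrow> bool) \<Rightarrow> bool" where
  "diamond_free V E \<longleftrightarrow> \<not> contains_induced {0..<4} diamond_E V E"

definition connected_graph :: "'a set \<Rightarrow> ('a \<Rightarrow> 'a \<Rightarrow> bool) \<Rightarrow> bool" where
  "connected_graph V E \<longleftrightarrow> V \<noteq> {} \<and>
     (\<forall>u\<in>V. \<forall>v\<in>V. (\<lambda>x y. x \<in> V \<and> y \<in> V \<and> E x y)\<^sup>*\<^sup>* u v)"

definition is_clique :: "'a set \<Rightarrow> ('a \<Rightarrow> 'a \<Rightarrow> bool) \<Rightarrow> 'a set \<Rightarrow> bool" where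
  "is_clique V E C \<longleftrightarrow> C \<subseteq> V \<and> (\<forall>x\<in>C. \<forall>y\<in>C. x \<noteq> y \<longrightarrow> E x y)"

definition clique_number :: "'a set \<Rightarrow> ('a \<Rightarrow> 'a \<Rightarrow> bool) \<Rightarrow> nat" where
  "clique_number V E = Max (card ` {C. is_clique V E C})"

definition independent_set :: "'a set \<Rightarrow> ('a \<Rightarrow> 'a \<Rightarrow> bool) \<Rightarrow> 'a set \<Rightarrow> bool" where
  "independent_set V E S \<longleftrightarrow> S \<subseteq> V \<and> (\<forall>x\<in>S. \<forall>y\<in>S. \<not> E x y)"

end

theory Submission
  imports Defs
begin

text \<open>If G is not diamond-free, fix an induced diamond: u, v non-adjacent and x, y adjacent,
  both complete to {u, v}. Every vertex lies in N(x) or is a non-neighbour of x, and the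
  non-neighbours are sorted by the first of y, u, v they miss. The neighbourhood N(x) is
  diamond-free (a diamond in it plus x is a K5-e) and its cliques extend by x. A class of
  non-neighbours of x missing y (resp. u, v) is anticomplete to the edge xy (resp. xu, xv),
  hence independent in a 2K2-free graph; the remaining class is complete to y, u, v, and an
  edge ab in it would make {u, v, y, a, b} a K5-e.\<close>

lemma contains_induced_mono:
  assumes "S \<subseteq> V" "contains_induced VH EH S E"
  shows "contains_induced VH EH V E"
  using assms unfolding contains_induced_def by (meson order_trans)

lemma twoK2_free_mono: "S \<subseteq> V \<Longrightarrow> twoK2_free V E \<Longrightarrow> twoK2_free S E"
  unfolding twoK2_free_def by (metis contains_induced_mono)

lemma contains_induced_listI:
  assumes "distinct xs" "set xs \<subseteq> V" "length xs = n"
    and "\<forall>i\<in>{0..<n}. \<forall>j\<in>{0..<n}. E (xs ! i) (xs ! j) \<longleftrightarrow> EH i j"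
  shows "contains_induced {0..<n} EH V E"
proof -
  have "inj_on ((!) xs) {0..<n}" using assms(1,3) by (simp add: inj_on_nth)
  moreover have "(!) xs ` {0..<n} \<subseteq> V"
    using assms(2,3) by (auto intro!: subsetD[OF assms(2)])
  ultimately show ?thesis
    using assms(4) unfolding contains_induced_def by (intro exI[of _ "(!) xs"]) simp
qed

lemma upto4_eq: "{0..<4::nat} = {0, 1, 2, 3}" by auto

lemma upto5_eq: "{0..<5::nat} = {0, 1, 2, 3, 4}" by auto

lemma contains_twoK2I:
  assumes "simple_graph V E" "x \<in> V" "y \<in> V" "a \<in> V" "b \<in> V" "E x y" "E a b"
    "\<not> E x a" "\<not> E x b" "\<not> E y a" "\<not> E y b"
  shows "contains_induced {0..<4} twoK2_E V E"
proof -
  from assms(1) have sym: "\<And>p q. E p q \<Longrightarrow> E q p" and irr: "\<And>p. \<not> E p p"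
    by (auto simp: simple_graph_def)
  have distinct: "distinct [x, y, a, b]" using assms irr sym[OF \<open>E a b\<close>] by auto
  have adjacency: "\<forall>i\<in>{0..<4}. \<forall>j\<in>{0..<4}.
      E ([x, y, a, b] ! i) ([x, y, a, b] ! j) \<longleftrightarrow> twoK2_E i j"
    unfolding upto4_eq using assms irr
    by (simp add: twoK2_E_def doubleton_eq_iff) (metis sym)+
  show ?thesis
    by (rule contains_induced_listI[OF distinct _ _ adjacency]) (use assms in simp_all)
qed

lemma contains_K5eI:
  assumes "simple_graph V E" "p \<in> V" "q \<in> V" "r \<in> V" "s \<in> V" "t \<in> V" "p \<noteq> q" "\<not> E p q"
    "E p r" "E p s" "E p t" "E q r" "E q s" "E q t" "E r s" "E r t" "E s t"
  shows "contains_induced {0..<5} K5e_E V E"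
proof -
  from assms(1) have sym: "\<And>p q. E p q \<Longrightarrow> E q p" and irr: "\<And>p. \<not> E p p"
    by (auto simp: simple_graph_def)
  have distinct: "distinct [p, q, r, s, t]" using assms irr by auto
  have adjacency: "\<forall>i\<in>{0..<5}. \<forall>j\<in>{0..<5}.
      E ([p, q, r, s, t] ! i) ([p, q, r, s, t] ! j) \<longleftrightarrow> K5e_E i j"
    unfolding upto5_eq using assms irr
    by (simp add: K5e_E_def doubleton_eq_iff) (metis sym)+
  show ?thesis
    by (rule contains_induced_listI[OF distinct _ _ adjacency]) (use assms in simp_all)
qed

lemma contains_diamond_iff:
  assumes "simple_graph V E"
  shows "contains_induced {0..<4} diamond_E V E \<longleftrightarrow>
    (\<exists>u\<in>V. \<exists>v\<in>V. \<exists>x\<in>V. \<exists>y\<in>V.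
       u \<noteq> v \<and> \<not> E u v \<and> E x y \<and> E x u \<and> E x v \<and> E y u \<and> E y v)"
    (is "?contains \<longleftrightarrow> ?diamond")
proof
  assume ?contains
  then obtain f where inj: "inj_on f {0..<4}" and in_V: "f ` {0..<4} \<subseteq> V"
    and adjacency: "\<forall>i\<in>{0..<4}. \<forall>j\<in>{0..<4}. E (f i) (f j) \<longleftrightarrow> diamond_E i j"
    unfolding contains_induced_def by blast
  have adj: "E (f i) (f j) \<longleftrightarrow> diamond_E i j" if "i < 4" "j < 4" for i j
    using adjacency that by simp
  define u v x y where "u = f 0" and "v = f 1" and "x = f 2" and "y = f 3"
  have "u \<noteq> v" using inj_onD[OF inj, of 0 1] by (auto simp: u_def v_def)
  moreover have "\<not> E u v" "E x y" "E x u" "E x v" "E y u" "E y v"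
    by (simp_all add: u_def v_def x_def y_def adj diamond_E_def doubleton_eq_iff)
  moreover have "u \<in> V" "v \<in> V" "x \<in> V" "y \<in> V"
    using in_V by (simp_all add: u_def v_def x_def y_def image_subset_iff)
  ultimately show ?diamond by blast
next
  from assms have sym: "\<And>p q. E p q \<Longrightarrow> E q p" and irr: "\<And>p. \<not> E p p"
    by (auto simp: simple_graph_def)
  assume ?diamond
  then obtain u v x y where in_V: "u \<in> V" "v \<in> V" "x \<in> V" "y \<in> V" and "u \<noteq> v"
    and edges: "\<not> E u v" "E x y" "E x u" "E x v" "E y u" "E y v"
    by blast
  have distinct: "distinct [u, v, x, y]" using \<open>u \<noteq> v\<close> edges irr by auto
  have adjacency: "\<forall>i\<in>{0..<4}. \<forall>j\<in>{0..<4}.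
      E ([u, v, x, y] ! i) ([u, v, x, y] ! j) \<longleftrightarrow> diamond_E i j"
    unfolding upto4_eq using edges irr
    by (simp add: diamond_E_def doubleton_eq_iff) (metis sym)+
  show ?contains
    by (rule contains_induced_listI[OF distinct _ _ adjacency]) (use in_V in simp_all)
qed

lemma twoK2_free_anticomplete_to_edge_independent:
  assumes "simple_graph V E" "twoK2_free V E" "p \<in> V" "q \<in> V" "E p q" "S \<subseteq> V"
    and "\<forall>w\<in>S. \<not> E p w \<and> \<not> E q w"
  shows "independent_set V E S"
  using assms contains_twoK2I[OF assms(1), of p q]
  unfolding independent_set_def twoK2_free_def by blast

lemma K5e_free_common_neighbours_independent:
  assumes "simple_graph V E" "K5e_free V E" "u \<in> V" "v \<in> V" "y \<in> V" "u \<noteq> v" "\<not> E u v"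
    "E y u" "E y v" "S \<subseteq> V"
    and "\<forall>w\<in>S. E y w \<and> E u w \<and> E v w"
  shows "independent_set V E S"
proof -
  have "\<not> E a b" if "a \<in> S" "b \<in> S" for a b
  proof
    assume "E a b"
    with that assms have "contains_induced {0..<5} K5e_E V E"
      by (intro contains_K5eI[OF assms(1), of u v y a b]) (auto simp: simple_graph_def)
    with assms(2) show False unfolding K5e_free_def by blast
  qed
  with assms(10) show ?thesis unfolding independent_set_def by blast
qed

lemma K5e_free_neighbourhood_diamond_free:
  assumes "simple_graph V E" "K5e_free V E" "x \<in> V"
  shows "diamond_free {w\<in>V. E x w} E"
proof -
  let ?N = "{w\<in>V. E x w}"
  have "simple_graph ?N E" using assms(1) by (simp add: simple_graph_def)
  moreover have "\<not> (u \<noteq> v \<and> \<not> E u v \<and> E a b \<and> E a u \<and> E a v \<and> E b u \<and> E b v)"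
    if "u \<in> ?N" "v \<in> ?N" "a \<in> ?N" "b \<in> ?N" for u v a b
  proof
    assume diamond: "u \<noteq> v \<and> \<not> E u v \<and> E a b \<and> E a u \<and> E a v \<and> E b u \<and> E b v"
    have sym: "\<And>p q. E p q \<Longrightarrow> E q p" using assms(1) by (simp add: simple_graph_def)
    \<comment> \<open>b and x are common neighbours of u, v, a, yet adjacent\<close>
    have "independent_set V E {b, x}"
      using that diamond sym assms
      by (intro K5e_free_common_neighbours_independent[OF assms(1,2), of u v a]) auto
    then show False using that unfolding independent_set_def by auto
  qed
  ultimately show ?thesis
    unfolding diamond_free_def contains_diamond_iff[OF \<open>simple_graph ?N E\<close>] by blast
qed

lemma finite_cliques: "finite V \<Longrightarrow> finite {C. is_clique V E C}"
  by (rule finite_subset[of _ "Pow V"]) (auto simp: is_clique_def)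

lemma clique_number_neighbourhood_less:
  assumes "simple_graph V E" "x \<in> V"
  shows "clique_number {w\<in>V. E x w} E < clique_number V E"
proof -
  let ?N = "{w\<in>V. E x w}"
  have finite_V: "finite V" and irr: "\<not> E x x"
    using assms(1) by (simp_all add: simple_graph_def)
  have "card C < clique_number V E" if clique: "is_clique ?N E C" for C
  proof -
    have "C \<subseteq> V" "x \<notin> C" using clique irr by (auto simp: is_clique_def)
    then have "card C < card (insert x C)" using finite_subset[OF _ finite_V] by simp
    also have "\<dots> \<le> clique_number V E"
    proof -
      have "is_clique V E (insert x C)"
        using clique assms unfolding is_clique_def simple_graph_def by auto
      then show ?thesis
        unfolding clique_number_def by (intro Max_ge finite_imageI finite_cliques finite_V) simp
    qed
    finally show ?thesis .
  qed
  moreover have "is_clique ?N E {}" by (simp add: is_clique_def)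
  moreover have "finite ?N" using finite_V by simp
  ultimately show ?thesis
    unfolding clique_number_def by (subst Max_less_iff) (auto intro: finite_cliques)
qed

lemma fibres_partition:
  assumes "\<forall>w\<in>V. c w \<in> I"
  shows "(\<Union>i\<in>I. {w\<in>V. c w = i}) = V"
    and "\<forall>i\<in>I. \<forall>j\<in>I. i \<noteq> j \<longrightarrow> {w\<in>V. c w = i} \<inter> {w\<in>V. c w = j} = {}"
  using assms by auto

theorem theorem3p9:
  fixes V :: "'a set" and E :: "'a \<Rightarrow> 'a \<Rightarrow> bool"
  assumes "simple_graph V E"
    and "connected_graph V E"
    and "twoK2_free V E"
    and "K5e_free V E"
  shows "(twoK2_free V E \<and> diamond_free V E) \<or>
         (\<exists>P :: nat \<Rightarrow> 'a set.
            (\<Union>i\<in>{1..5}. P i) = V \<and>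
            (\<forall>i\<in>{1..5}. \<forall>j\<in>{1..5}. i \<noteq> j \<longrightarrow> P i \<inter> P j = {}) \<and>
            twoK2_free (P 1) E \<and> diamond_free (P 1) E \<and>
            clique_number (P 1) E \<le> clique_number V E - 1 \<and>
            (\<forall>i\<in>{2..5}. independent_set V E (P i)))"
proof (cases "diamond_free V E")
  case True
  then show ?thesis using assms(3) by blast
next
  case False
  then obtain u v x y where in_V: "u \<in> V" "v \<in> V" "x \<in> V" "y \<in> V" and "u \<noteq> v"
    and edges: "\<not> E u v" "E x y" "E x u" "E x v" "E y u" "E y v"
    unfolding diamond_free_def contains_diamond_iff[OF assms(1)] by blast
  define c where "c w = (if E x w then 1 else if \<not> E y w then 2
    else if \<not> E u w then 3 else if \<not> E v w then 4 else 5 :: nat)" for w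
  define P where "P i = {w\<in>V. c w = i}" for i
  have "\<forall>w\<in>V. c w \<in> {1..5}" by (simp add: c_def)
  note partition = fibres_partition[OF this, folded P_def]
  have P: "P 1 = {w\<in>V. E x w}" "P 2 = {w\<in>V. \<not> E x w \<and> \<not> E y w}"
    "P 3 = {w\<in>V. \<not> E x w \<and> E y w \<and> \<not> E u w}"
    "P 4 = {w\<in>V. \<not> E x w \<and> E y w \<and> E u w \<and> \<not> E v w}"
    "P 5 = {w\<in>V. \<not> E x w \<and> E y w \<and> E u w \<and> E v w}"
    by (auto simp: P_def c_def)
  have upto_2_5: "{2..5::nat} = {2, 3, 4, 5}" by auto
  have "independent_set V E (P 2)"
    unfolding P by (rule twoK2_free_anticomplete_to_edge_independent[OF assms(1,3), of x y])
      (use in_V edges in auto)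
  moreover have "independent_set V E (P 3)"
    unfolding P by (rule twoK2_free_anticomplete_to_edge_independent[OF assms(1,3), of x u])
      (use in_V edges in auto)
  moreover have "independent_set V E (P 4)"
    unfolding P by (rule twoK2_free_anticomplete_to_edge_independent[OF assms(1,3), of x v])
      (use in_V edges in auto)
  moreover have "independent_set V E (P 5)"
    unfolding P by (rule K5e_free_common_neighbours_independent[OF assms(1,4), of u v y])
      (use in_V \<open>u \<noteq> v\<close> edges in auto)
  ultimately have "\<forall>i\<in>{2..5}. independent_set V E (P i)"
    unfolding upto_2_5 by simp
  moreover have "clique_number (P 1) E \<le> clique_number V E - 1"
    using clique_number_neighbourhood_less[OF assms(1) \<open>x \<in> V\<close>] unfolding P by simp
  moreover have "twoK2_free (P 1) E" "diamond_free (P 1) E"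
    using twoK2_free_mono[OF _ assms(3)]
      K5e_free_neighbourhood_diamond_free[OF assms(1,4) \<open>x \<in> V\<close>]
    unfolding P by auto
  ultimately show ?thesis using partition by (intro disjI2 exI[of _ P]) simp
qed

end
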